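(* Let $I$ and $J$ be compositions of $n$ and let $W(I,J)$ be the set of packed words $w$ with $\mathrm{WC}(w)=I$ and $\mathrm{DC}(w)\succeq J$. Then the coefficient $C_I^J(q)$ of $\Psi_I$ in $S^J(q)$ is \[ C_I^J(q)=\sum_{w\in W(I,J)}q^{\mathrm{sinv}(w)}. \]
   Context: Compositions: sequences of positive integers with sum $n$; $\mathrm{Des}(I)$ is the set of partial sums other than $n$; $K\succeq J$ ($K$ coarser than or equal to $J$) iff $\mathrm{Des}(K)\subseteq\mathrm{Des}(J)$. Over $\mathbb K(q)$ ($\mathrm{char}\,\mathbb K=0$): packed words are words with letter set $\{1,\dots,m\}$; $\mathrm{pack}$ replaces the $t$-th smallest letter by $t$. For a packed word $w=w_1\cdots w_n$: $\mathrm{DC}(w)$ is the composition of $n$ with descent set $\{i:w_i>w_{i+1}\}$; $\mathrm{WC}(w)$ is the composition of $n$ whose descent set is the set of positions $p<n$ with $w_p$ not occurring in $w_{p+1}\cdots w_n$; $\mathrm{sinv}(w)=\#\{i<j:w_i>w_j,\ w_j\text{ not occurring in }w_{j+1}\cdots w_n\}$. $\mathbf{WQSym}$ has basis $\mathbf M_u$ with $\mathbf M_{u'}\mathbf M_{u''}=\sum\mathbf M_u$ over packed $u=v\cdot w$ with $\mathrm{pack}(v)=u'$, $\mathrm{pack}(w)=u''$; $\mathbf M_{u'}\star_q\mathbf M_{u''}=\sum q^{\mathrm{sinv}(u)-\mathrm{sinv}(u')-\mathrm{sinv}(u'')}\mathbf M_u$ (associative). $\mathbf{Sym}$ is the quotient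 by the span of $\mathbf M_u-\mathbf M_v$ with $\mathrm{WC}(u)=\mathrm{WC}(v)$, $\zeta$ the quotient map, $\Psi_I=\zeta(\mathbf M_u)$ for $\mathrm{WC}(u)=I$ (a basis). $\tilde S_m=\sum\mathbf M_u$ over nondecreasing packed $u$ of length $m$; for $J=(j_1,\dots,j_l)$, $S^J(q)=\zeta(\tilde S_{j_1}\star_q\cdots\star_q\tilde S_{j_l})$. *)

theory Defs
  imports "HOL-Computational_Algebra.Polynomial" "HOL-Computational_Algebra.Fraction_Field"
begin

(* Words are nat lists; positions are 0-indexed internally (paper position p = index p-1). *)

definition packed :: "nat list \<Rightarrow> bool" where
  "packed w \<longleftrightarrow> (\<exists>m. set w = {1..m})"

definition pack :: "nat list \<Rightarrow> nat list" where
  "pack w = map (\<lambda>x. card {y \<in> set w. y \<le> x}) w"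

definition is_comp :: "nat \<Rightarrow> nat list \<Rightarrow> bool" where
  "is_comp n I \<longleftrightarrow> (\<forall>x\<in>set I. 0 < x) \<and> sum_list I = n"

definition Des :: "nat list \<Rightarrow> nat set" where
  "Des I = {sum_list (take k I) | k. 0 < k \<and> k < length I}"

definition coarser :: "nat list \<Rightarrow> nat list \<Rightarrow> bool" where
  "coarser K J \<longleftrightarrow> Des K \<subseteq> Des J"

definition comp_of :: "nat \<Rightarrow> nat set \<Rightarrow> nat list" where
  "comp_of n D = (if n = 0 then [] else
     (let ds = sorted_list_of_set (D \<inter> {1..<n}) @ [n]
      in map (\<lambda>(a, b). b - a) (zip (0 # ds) ds)))"

definition DC :: "nat list \<Rightarrow> nat list" where
  "DC w = comp_of (length w) {p. 1 \<le> p \<and> p < length w \<and> w ! (p - 1) > w ! p}"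

definition WC :: "nat list \<Rightarrow> nat list" where
  "WC w = comp_of (length w) {p. 1 \<le> p \<and> p < length w \<and> w ! (p - 1) \<notin> set (drop p w)}"

definition sinv :: "nat list \<Rightarrow> nat" where
  "sinv w = card {(i, j). i < j \<and> j < length w \<and> w ! i > w ! j \<and> w ! j \<notin> set (drop (j + 1) w)}"

(* Elements of WQSym are represented by their coefficient functions u \<mapsto> coefficient of M_u
   (supported on packed words). *)
type_synonym 'k wqsym = "nat list \<Rightarrow> 'k"

(* the q-deformed product, bilinear extension of
   M_u' \<star>_q M_u'' = \<Sum> q^(sinv u - sinv u' - sinv u'') M_u  over packed u = v w,
   pack v = u', pack w = u'' *)
definition qstar :: "'k::field \<Rightarrow> 'k wqsym \<Rightarrow> 'k wqsym \<Rightarrow> 'k wqsym" where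
  "qstar q f g u = (if packed u then
     (\<Sum>k\<le>length u. f (pack (take k u)) * g (pack (drop k u)) *
        q powi (int (sinv u) - int (sinv (pack (take k u))) - int (sinv (pack (drop k u)))))
   else 0)"

definition wunit :: "'k::field wqsym" where
  "wunit u = (if u = [] then 1 else 0)"

definition Stilde :: "nat \<Rightarrow> 'k::field wqsym" where
  "Stilde m u = (if packed u \<and> length u = m \<and> sorted u then 1 else 0)"

(* \<tilde>S_j1 \<star>_q ... \<star>_q \<tilde>S_jl  (the product is associative) *)
fun Sprod :: "'k::field \<Rightarrow> nat list \<Rightarrow> 'k wqsym" where
  "Sprod q [] = wunit"
| "Sprod q (j # js) = qstar q (Stilde j) (Sprod q js)"

(* The quotient map \<zeta> : WQSym \<rightarrow> Sym, expressed in the basis \<Psi>: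
   zeta F I = coefficient of \<Psi>_I in \<zeta>(F) = \<Sum> over packed u with WC(u) = I of F(u). *)
definition zeta :: "'k::field wqsym \<Rightarrow> nat list \<Rightarrow> 'k" where
  "zeta F I = (\<Sum>u \<in> {u. packed u \<and> WC u = I}. F u)"

definition qvar :: "'a::field poly fract" where
  "qvar = Fract [:0, 1:] 1"

(* C_I^J(q): coefficient of \<Psi>_I in S^J(q) = \<zeta>(\<tilde>S_j1 \<star>_q ... \<star>_q \<tilde>S_jl) *)
definition CIJ :: "nat list \<Rightarrow> nat list \<Rightarrow> 'a::field_char_0 poly fract" where
  "CIJ I J = zeta (Sprod qvar J) I"

definition Wset :: "nat list \<Rightarrow> nat list \<Rightarrow> nat list set" where
  "Wset I J = {w. packed w \<and> WC w = I \<and> coarser (DC w) J}"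

end

theory Submission
  imports Defs
begin

text \<open>
  A deconcatenation \<open>u = v w\<close> contributes to \<open>\<tilde>S\<^sub>j \<star>\<^sub>q F\<close> exactly when \<open>v\<close> has length \<open>j\<close>
  and is nondecreasing; then \<open>sinv (pack v) = 0\<close> and the factor \<open>q\<^bsup>sinv (pack w)\<^esup>\<close> carried
  by \<open>F\<close> cancels against the twisting exponent, leaving \<open>q\<^bsup>sinv u\<^esup>\<close>. By induction on \<open>J\<close>,
  the coefficient of \<open>M\<^sub>u\<close> in \<open>\<tilde>S\<^sub>j\<^sub>1 \<star>\<^sub>q \<dots> \<star>\<^sub>q \<tilde>S\<^sub>j\<^sub>l\<close> is therefore \<open>q\<^bsup>sinv u\<^esup>\<close> if the descents
  of \<open>u\<close> lie in \<open>Des J\<close>, i.e. \<open>DC u \<succeq> J\<close>, and \<open>0\<close> otherwise. Applying \<open>\<zeta>\<close> sums these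
  coefficients over the packed words with \<open>WC u = I\<close>.
\<close>

definition consecutive_diffs :: "nat \<Rightarrow> nat list \<Rightarrow> nat list" where
  "consecutive_diffs a ds = map (\<lambda>(a, b). b - a) (zip (a # ds) ds)"

lemma length_consecutive_diffs [simp]: "length (consecutive_diffs a ds) = length ds"
  by (simp add: consecutive_diffs_def)

lemma sum_list_take_consecutive_diffs:
  assumes "sorted (a # ds)" and "k \<le> length ds"
  shows "sum_list (take k (consecutive_diffs a ds)) = (a # ds) ! k - a"
  using assms
proof (induction ds arbitrary: a k)
  case Nil
  then show ?case by (simp add: consecutive_diffs_def)
next
  case (Cons d ds)
  show ?case
  proof (cases k)
    case 0
    then show ?thesis by (simp add: consecutive_diffs_def)
  next
    case (Suc k')
    have sorted: "sorted (d # ds)" and "a \<le> d" using Cons.prems by auto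
    have "(d # ds) ! k' \<in> set (d # ds)" using Cons.prems Suc by (intro nth_mem) simp
    then have "d \<le> (d # ds) ! k'" using sorted by auto
    moreover have "consecutive_diffs a (d # ds) = (d - a) # consecutive_diffs d ds"
      by (simp add: consecutive_diffs_def)
    ultimately show ?thesis
      using Cons.IH[OF sorted, of k'] Cons.prems Suc \<open>a \<le> d\<close> by simp
  qed
qed

lemma sorted_cuts: "sorted (0 # sorted_list_of_set (D \<inter> {1..<m}) @ [m::nat])"
proof -
  have "set (sorted_list_of_set (D \<inter> {1..<m})) \<subseteq> {1..<m}" by auto
  then show ?thesis by (auto simp: sorted_append)
qed

lemma comp_of_eq_consecutive_diffs:
  "0 < m \<Longrightarrow> comp_of m D = consecutive_diffs 0 (sorted_list_of_set (D \<inter> {1..<m}) @ [m])"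
  by (simp add: comp_of_def consecutive_diffs_def Let_def)

lemma sum_list_comp_of: "sum_list (comp_of m D) = m"
proof (cases "m = 0")
  case True
  then show ?thesis by (simp add: comp_of_def)
next
  case False
  let ?ds = "sorted_list_of_set (D \<inter> {1..<m}) @ [m]"
  have "sum_list (comp_of m D) = sum_list (take (length ?ds) (consecutive_diffs 0 ?ds))"
    using False by (simp add: comp_of_eq_consecutive_diffs)
  also have "\<dots> = (0 # ?ds) ! length ?ds - 0"
    by (rule sum_list_take_consecutive_diffs[OF sorted_cuts]) simp
  also have "\<dots> = m"
    by (simp add: nth_append)
  finally show ?thesis .
qed

lemma Des_comp_of: "Des (comp_of m D) = D \<inter> {1..<m}"
proof (cases "m = 0")
  case True
  then show ?thesis by (simp add: comp_of_def Des_def)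
next
  case False
  let ?s = "sorted_list_of_set (D \<inter> {1..<m})"
  have length: "length (comp_of m D) = Suc (length ?s)"
    using False by (simp add: comp_of_eq_consecutive_diffs)
  have partial_sum: "sum_list (take (Suc i) (comp_of m D)) = ?s ! i" if "i < length ?s" for i
    using False that sum_list_take_consecutive_diffs[OF sorted_cuts, of "Suc i" D m]
    by (simp add: comp_of_eq_consecutive_diffs nth_append)
  have "Des (comp_of m D) = {sum_list (take (Suc i) (comp_of m D)) | i. i < length ?s}"
    unfolding Des_def length by (metis Suc_less_eq gr0_conv_Suc)
  also have "\<dots> = {?s ! i | i. i < length ?s}"
    by (intro Collect_cong ex_cong1) (auto simp: partial_sum)
  also have "\<dots> = set ?s"
    by (rule set_conv_nth[symmetric])
  finally show ?thesis by simp
qed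

definition descents :: "nat list \<Rightarrow> nat set" where
  "descents w = {p. 1 \<le> p \<and> p < length w \<and> w ! (p - 1) > w ! p}"

lemma descents_Nil [simp]: "descents [] = {}"
  by (simp add: descents_def)

lemma Des_DC: "Des (DC w) = descents w"
proof -
  have "DC w = comp_of (length w) (descents w)"
    by (simp add: DC_def descents_def)
  moreover have "descents w \<subseteq> {1..<length w}"
    by (auto simp: descents_def)
  ultimately show ?thesis by (simp add: Des_comp_of Int_absorb2)
qed

lemma sorted_iff_descents_empty: "sorted w \<longleftrightarrow> descents w = {}"
proof
  assume "sorted w"
  then show "descents w = {}"
    by (auto simp: descents_def sorted_iff_nth_mono leD)
next
  assume empty: "descents w = {}"
  show "sorted w" unfolding sorted_iff_nth_Suc
  proof (intro allI impI)
    fix i assume "Suc i < length w"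
    moreover have "Suc i \<notin> descents w" using empty by simp
    ultimately show "w ! i \<le> w ! Suc i" by (simp add: descents_def)
  qed
qed

lemma descents_map_strict_mono:
  assumes "strict_mono_on (set w) f"
  shows "descents (map f w) = descents w"
proof -
  have "f (w ! p) < f (w ! (p - 1)) \<longleftrightarrow> w ! p < w ! (p - 1)" if "1 \<le> p" "p < length w" for p
    using that by (intro strict_mono_on_less[OF assms]) auto
  then show ?thesis by (auto simp: descents_def)
qed

lemma descents_take: "descents (take j u) = descents u \<inter> {..<j}"
  by (auto simp: descents_def)

lemma descents_drop: "p \<in> descents (drop j u) \<longleftrightarrow> 1 \<le> p \<and> j + p \<in> descents u"
  by (cases "j \<le> length u") (auto simp: descents_def nth_drop add_diff_assoc)

lemma pack_eq_map: "pack w = map (\<lambda>x. card {y \<in> set w. y \<le> x}) w"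
  by (simp add: pack_def)

lemma strict_mono_on_rank:
  fixes w :: "'a::linorder list"
  shows "strict_mono_on (set w) (\<lambda>x. card {y \<in> set w. y \<le> x})"
proof (rule strict_mono_onI)
  fix r s assume "r \<in> set w" "s \<in> set w" "r < s"
  then have "{y \<in> set w. y \<le> r} \<subseteq> {y \<in> set w. y \<le> s}"
    and "s \<in> {y \<in> set w. y \<le> s} - {y \<in> set w. y \<le> r}" by auto
  then have "{y \<in> set w. y \<le> r} \<subset> {y \<in> set w. y \<le> s}" by blast
  then show "card {y \<in> set w. y \<le> r} < card {y \<in> set w. y \<le> s}"
    by (intro psubset_card_mono) auto
qed

lemma packed_pack: "packed (pack w)"
proof -
  let ?rank = "\<lambda>x. card {y \<in> set w. y \<le> x}"
  have "?rank ` set w \<subseteq> {1..card (set w)}"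
  proof
    fix z assume "z \<in> ?rank ` set w"
    then obtain x where "x \<in> set w" "z = ?rank x" by auto
    moreover have "{y \<in> set w. y \<le> x} \<subseteq> set w" by auto
    ultimately show "z \<in> {1..card (set w)}"
      by (auto simp: Suc_le_eq card_gt_0_iff intro: card_mono)
  qed
  moreover have "card (?rank ` set w) = card (set w)"
    using strict_mono_on_imp_inj_on[OF strict_mono_on_rank] by (rule card_image)
  ultimately have "?rank ` set w = {1..card (set w)}"
    by (intro card_subset_eq) auto
  then show ?thesis by (auto simp: packed_def pack_eq_map)
qed

lemma length_pack [simp]: "length (pack w) = length w"
  by (simp add: pack_def)

lemma descents_pack [simp]: "descents (pack w) = descents w"
  unfolding pack_eq_map by (rule descents_map_strict_mono[OF strict_mono_on_rank])

lemma sorted_pack_iff [simp]: "sorted (pack w) \<longleftrightarrow> sorted w"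
  by (simp add: sorted_iff_descents_empty)

lemma sinv_eq_0_if_sorted:
  assumes "sorted w"
  shows "sinv w = 0"
proof -
  have no_inversions: "{(i, j). i < j \<and> j < length w \<and> w ! i > w ! j \<and> w ! j \<notin> set (drop (j + 1) w)} = {}"
    using sorted_nth_mono[OF assms] by (auto simp: not_less less_imp_le)
  show ?thesis unfolding sinv_def no_inversions by (rule card.empty)
qed

lemma Des_eq_image: "Des I = (\<lambda>k. sum_list (take k I)) ` {0<..<length I}"
  by (auto simp: Des_def)

lemma Des_Cons: "Des (j # js) = (if js = [] then {} else insert j ((+) j ` Des js))"
proof -
  have "{0<..<length (j # js)} = Suc ` {..<length js}"
    by (auto simp: image_iff gr0_conv_Suc)
  then have "Des (j # js) = (\<lambda>k. j + sum_list (take k js)) ` {..<length js}"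
    unfolding Des_eq_image by (simp add: image_image)
  also have "{..<length js} = (if js = [] then {} else insert 0 {0<..<length js})"
    by auto
  finally show ?thesis unfolding Des_eq_image by (auto simp: image_image)
qed

lemma descents_subset_Des_Cons_iff:
  assumes "length u = j + sum_list js"
  shows "descents u \<subseteq> Des (j # js) \<longleftrightarrow>
    descents (take j u) = {} \<and> descents (drop j u) \<subseteq> Des js"
proof (cases "js = []")
  case True
  then show ?thesis using assms by (simp add: Des_Cons Des_def)
next
  case False
  have "descents u \<subseteq> insert j ((+) j ` Des js) \<longleftrightarrow>
      (\<forall>p\<in>descents u. \<not> p < j) \<and> (\<forall>p. 1 \<le> p \<and> j + p \<in> descents u \<longrightarrow> p \<in> Des js)"
  proof (intro iffI conjI ballI allI impI subsetI)
    fix p assume "descents u \<subseteq> insert j ((+) j ` Des js)" "p \<in> descents u"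
    then show "\<not> p < j" by auto
  next
    fix p assume "descents u \<subseteq> insert j ((+) j ` Des js)" "1 \<le> p \<and> j + p \<in> descents u"
    then show "p \<in> Des js" by auto
  next
    fix p
    assume "(\<forall>p\<in>descents u. \<not> p < j) \<and> (\<forall>p. 1 \<le> p \<and> j + p \<in> descents u \<longrightarrow> p \<in> Des js)"
      and p: "p \<in> descents u"
    then have no_early: "\<not> p < j" and late: "\<And>d. 1 \<le> d \<Longrightarrow> j + d \<in> descents u \<Longrightarrow> d \<in> Des js"
      by auto
    show "p \<in> insert j ((+) j ` Des js)"
    proof (cases "p = j")
      case False
      then have "p = j + (p - j)" and "p - j \<in> Des js"
        using no_early p late[of "p - j"] by auto
      then show ?thesis by blast
    qed simp
  qed
  moreover have "descents (take j u) = {} \<longleftrightarrow> (\<forall>p\<in>descents u. \<not> p < j)"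
    by (auto simp: descents_take)
  moreover have "descents (drop j u) \<subseteq> Des js \<longleftrightarrow>
      (\<forall>p. 1 \<le> p \<and> j + p \<in> descents u \<longrightarrow> p \<in> Des js)"
    by (auto simp: descents_drop)
  ultimately show ?thesis using False by (simp add: Des_Cons)
qed

lemma qstar_Stilde_left:
  fixes q :: "'k::field"
  assumes "packed u"
  shows "qstar q (Stilde j) g u =
    (if j \<le> length u \<and> sorted (take j u)
     then g (pack (drop j u)) * q powi (int (sinv u) - int (sinv (pack (drop j u)))) else 0)"
proof -
  let ?T = "\<lambda>k. Stilde j (pack (take k u)) * g (pack (drop k u)) *
    q powi (int (sinv u) - int (sinv (pack (take k u))) - int (sinv (pack (drop k u))))"
  have "?T k = (if k = j then ?T j else 0)" if "k \<le> length u" for k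
    using that by (auto simp: Stilde_def)
  then have "qstar q (Stilde j) g u = (\<Sum>k\<le>length u. if k = j then ?T j else 0)"
    using assms by (simp add: qstar_def)
  also have "\<dots> = (if j \<le> length u then ?T j else 0)"
    by simp
  also have "\<dots> = (if j \<le> length u \<and> sorted (take j u)
     then g (pack (drop j u)) * q powi (int (sinv u) - int (sinv (pack (drop j u)))) else 0)"
  proof -
    have "Stilde j (pack (take j u)) = (if sorted (take j u) then 1 else (0::'k))" if "j \<le> length u"
      using that by (simp add: Stilde_def packed_pack)
    moreover have "sinv (pack (take j u)) = 0" if "sorted (take j u)"
      using that by (simp add: sinv_eq_0_if_sorted)
    ultimately show ?thesis by (cases "j \<le> length u"; cases "sorted (take j u)") simp_all
  qed
  finally show ?thesis .
qed

lemma power_mult_power_int_diff: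
  "(q::'k::field) \<noteq> 0 \<Longrightarrow> q ^ b * q powi (int a - int b) = q ^ a"
  by (simp add: power_int_diff)

theorem Sprod_apply:
  assumes "(q::'k::field) \<noteq> 0"
  shows "Sprod q J u =
    (if packed u \<and> length u = sum_list J \<and> descents u \<subseteq> Des J then q ^ sinv u else 0)"
proof (induction J arbitrary: u)
  case Nil
  have "packed []" unfolding packed_def by (rule exI[of _ 0]) simp
  then show ?case by (auto simp: wunit_def sinv_def Des_def)
next
  case (Cons j js)
  show ?case
  proof (cases "packed u \<and> length u = j + sum_list js")
    case True
    let ?w = "pack (drop j u)"
    have "Sprod q (j # js) u = (if sorted (take j u) \<and> descents (drop j u) \<subseteq> Des js
        then q ^ sinv ?w * q powi (int (sinv u) - int (sinv ?w)) else 0)"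
      using True Cons.IH[of ?w] by (simp add: qstar_Stilde_left packed_pack)
    also have "\<dots> = (if descents u \<subseteq> Des (j # js) then q ^ sinv u else 0)"
      using True descents_subset_Des_Cons_iff[of u j js]
      by (simp add: power_mult_power_int_diff[OF assms] sorted_iff_descents_empty)
    finally show ?thesis using True by simp
  next
    case False
    have "Sprod q (j # js) u = 0"
    proof (cases "packed u")
      case True
      then show ?thesis
        using False Cons.IH[of "pack (drop j u)"] by (auto simp: qstar_Stilde_left packed_pack)
    qed (simp add: qstar_def)
    then show ?thesis using False by auto
  qed
qed

lemma qvar_nonzero: "(qvar :: 'a::field poly fract) \<noteq> 0"
  by (simp add: qvar_def Zero_fract_def eq_fract)

lemma finite_packed_length: "finite {u. packed u \<and> length u = n}"
proof (rule finite_subset)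
  show "{u. packed u \<and> length u = n} \<subseteq> {u. set u \<subseteq> {1..n} \<and> length u = n}"
  proof safe
    fix u x assume "packed u" "x \<in> set u"
    then obtain m where "set u = {1..m}" "x \<in> {1..m}" by (auto simp: packed_def)
    moreover have "card (set u) \<le> length u" by (rule card_length)
    ultimately show "x \<in> {1..length u}" by auto
  qed
qed (rule finite_lists_length_eq, simp)

lemma sum_list_WC: "sum_list (WC u) = length u"
  by (simp add: WC_def sum_list_comp_of)

theorem mainTheorem9:
  fixes n :: nat and I J :: "nat list"
  assumes "is_comp n I" and "is_comp n J"
  shows "(CIJ I J :: 'a::field_char_0 poly fract) = (\<Sum>w \<in> Wset I J. qvar ^ sinv w)"
proof -
  define A where "A = {u. packed u \<and> WC u = I}"
  have length_A: "length u = n" if "u \<in> A" for u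
    using that assms(1) sum_list_WC[of u] by (simp add: A_def is_comp_def)
  have "finite A"
    using length_A by (intro finite_subset[OF _ finite_packed_length[of n]]) (auto simp: A_def)
  have "(CIJ I J :: 'a poly fract) = (\<Sum>u\<in>A. Sprod qvar J u)"
    by (simp add: CIJ_def zeta_def A_def)
  also have "\<dots> = (\<Sum>u\<in>A. if length u = sum_list J \<and> descents u \<subseteq> Des J then qvar ^ sinv u else 0)"
    by (rule sum.cong) (auto simp: Sprod_apply[OF qvar_nonzero] A_def)
  also have "\<dots> = (\<Sum>u\<in>{u\<in>A. length u = sum_list J \<and> descents u \<subseteq> Des J}. qvar ^ sinv u)"
    by (rule sum.inter_filter[OF \<open>finite A\<close>, symmetric])
  also have "{u\<in>A. length u = sum_list J \<and> descents u \<subseteq> Des J} = Wset I J"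
    using length_A assms(2) by (auto simp: Wset_def A_def coarser_def Des_DC is_comp_def)
  finally show ?thesis .
qed

end
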